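(* Let $\mathcal H$ be a finite-dimensional Hilbert space and $\mathscr L\in\mathcal L(\mathcal L(\mathcal H))$ such that $e^{t\mathscr L}$ is completely positive for all $t\in\mathbb R$. Then the minimal presentation of $\mathscr L$ has $\Psi=0$, i.e., $\mathscr L\rho=-(G\rho+\rho G)-i(H\rho-\rho H)$ for some hermitian $G,H$ with $\operatorname{Tr}H=0$. If in addition $e^{t\mathscr L}$ is trace non-increasing for all $t\in\mathbb R$, then also $G=0$, so that $e^{t\mathscr L}\rho=e^{-itH}\rho\,e^{itH}$ for all $t$ and $\rho$.
   Context: CP (completely positive) means: for every $N\ge1$, $\Lambda\otimes\mathrm{Id}_{\mathcal L(\mathbb C^N)}$ maps positive semidefinite operators to positive semidefinite operators. A minimal presentation of $\mathscr L$ is a representation $\mathscr L\rho=\Psi\rho-(G\rho+\rho G)-i(H\rho-\rho H)$ with $\Psi$ CP, $G,H$ hermitian, $\operatorname{Tr}H=0$ and the Jamiołkowski transform $\mathfrak J\Psi$ supported on the trace-zero operators (it annihilates $\mathrm{Id}_{\mathcal H}$ and has range in $\{A:\operatorname{Tr}A=0\}$), where $\mathfrak J\Psi$ is the operator on $\mathcal L(\mathcal H)$ with $\langle m\overline k,(\mathfrak J\Psi)(n\overline h)\rangle=\langle m\overline n,\Psi(k\overline h)\rangle$ for all $m,n,h,k\in\mathcal H$, using the Hilbert–Schmidt inner product and $k\overline h:x\mapsto k\langle h,x\rangle$. Trace non-increasing means $\operatorname{Tr}\Lambda\rho\le\operatorname{Tr}\rho$ for positive semidefinite $\rho$. *)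

theory Defs
  imports "HOL-Analysis.Analysis" "HOL-Library.Complex_Order"
begin

text \<open>The finite-dimensional Hilbert space is complex^'n (any finite index type 'n);
  operators on it are matrices complex^'n^'n; superoperators are maps on matrices.
  The order on complex numbers is the partial order of HOL-Library.Complex_Order
  (a \<le> b iff Re a \<le> Re b and Im a = Im b).\<close>

type_synonym 'n cmat = "complex^'n^'n"

definition cscale :: "complex \<Rightarrow> 'n::finite cmat \<Rightarrow> 'n cmat" where
  "cscale c X = (\<chi> i j. c * X$i$j)"

definition mat_adj :: "'n::finite cmat \<Rightarrow> 'n cmat" where
  "mat_adj A = (\<chi> i j. cnj (A$j$i))"

definition hermitian :: "'n::finite cmat \<Rightarrow> bool" where
  "hermitian A \<longleftrightarrow> mat_adj A = A"

definition psd :: "'n::finite cmat \<Rightarrow> bool" where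
  "psd A \<longleftrightarrow> (\<forall>x::complex^'n. 0 \<le> (\<Sum>i\<in>UNIV. \<Sum>j\<in>UNIV. cnj (x$i) * A$i$j * x$j))"

definition clinear_sop :: "('n::finite cmat \<Rightarrow> 'n cmat) \<Rightarrow> bool" where
  "clinear_sop L \<longleftrightarrow> (\<forall>X Y. L (X + Y) = L X + L Y) \<and> (\<forall>c X. L (cscale c X) = cscale c (L X))"

text \<open>An operator on complex^'n \<otimes> complex^N is represented as an N x N block matrix
  X a b (a, b < N) of operators on complex^'n; positivity of such an operator:\<close>
definition block_psd :: "nat \<Rightarrow> (nat \<Rightarrow> nat \<Rightarrow> 'n::finite cmat) \<Rightarrow> bool" where
  "block_psd N X \<longleftrightarrow> (\<forall>v :: nat \<Rightarrow> complex^'n.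
      0 \<le> (\<Sum>a<N. \<Sum>b<N. \<Sum>i\<in>UNIV. \<Sum>j\<in>UNIV. cnj (v a $ i) * X a b $ i $ j * v b $ j))"

text \<open>Complete positivity: \<Lambda> \<otimes> Id acts blockwise on block matrices.\<close>
definition completely_positive :: "('n::finite cmat \<Rightarrow> 'n cmat) \<Rightarrow> bool" where
  "completely_positive \<Lambda> \<longleftrightarrow>
     (\<forall>N::nat. N \<ge> 1 \<longrightarrow> (\<forall>X. block_psd N X \<longrightarrow> block_psd N (\<lambda>a b. \<Lambda> (X a b))))"

definition trace_nonincreasing :: "('n::finite cmat \<Rightarrow> 'n cmat) \<Rightarrow> bool" where
  "trace_nonincreasing \<Lambda> \<longleftrightarrow> (\<forall>\<rho>. psd \<rho> \<longrightarrow> trace (\<Lambda> \<rho>) \<le> trace \<rho>)"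

definition sop_exp :: "real \<Rightarrow> ('n::finite cmat \<Rightarrow> 'n cmat) \<Rightarrow> 'n cmat \<Rightarrow> 'n cmat" where
  "sop_exp t L X = (\<Sum>k. (t ^ k / fact k) *\<^sub>R (L ^^ k) X)"

primrec mat_pow :: "'n::finite cmat \<Rightarrow> nat \<Rightarrow> 'n cmat" where
  "mat_pow A 0 = mat 1"
| "mat_pow A (Suc k) = A ** mat_pow A k"

definition mat_exp :: "'n::finite cmat \<Rightarrow> 'n cmat" where
  "mat_exp A = (\<Sum>k. (1 / fact k) *\<^sub>R mat_pow A k)"

definition mat_unit :: "'n::finite \<Rightarrow> 'n \<Rightarrow> 'n cmat" where
  "mat_unit a b = (\<chi> i j. if i = a \<and> j = b then 1 else 0)"

text \<open>Jamiolkowski transform, written in the standard basis: with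
  m = e_a, k = e_b, n = e_c, h = e_d the defining identity
  <m kbar, (J\<Psi>)(n hbar)> = <m nbar, \<Psi>(k hbar)> reads
  ((J\<Psi>)(E_cd))_ab = (\<Psi>(E_bd))_ac; extended linearly.\<close>
definition jamiolkowski :: "('n::finite cmat \<Rightarrow> 'n cmat) \<Rightarrow> 'n cmat \<Rightarrow> 'n cmat" where
  "jamiolkowski \<Psi> X = (\<chi> a b. \<Sum>c\<in>UNIV. \<Sum>d\<in>UNIV. X$c$d * \<Psi> (mat_unit b d) $ a $ c)"

definition supported_trace_zero :: "('n::finite cmat \<Rightarrow> 'n cmat) \<Rightarrow> bool" where
  "supported_trace_zero T \<longleftrightarrow> T (mat 1) = 0 \<and> (\<forall>X. trace (T X) = 0)"

definition minimal_presentation ::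
  "('n::finite cmat \<Rightarrow> 'n cmat) \<Rightarrow> ('n cmat \<Rightarrow> 'n cmat) \<Rightarrow> 'n cmat \<Rightarrow> 'n cmat \<Rightarrow> bool" where
  "minimal_presentation L \<Psi> G H \<longleftrightarrow>
     clinear_sop \<Psi> \<and> completely_positive \<Psi> \<and> hermitian G \<and> hermitian H \<and> trace H = 0 \<and>
     supported_trace_zero (jamiolkowski \<Psi>) \<and>
     (\<forall>\<rho>. L \<rho> = \<Psi> \<rho> - (G ** \<rho> + \<rho> ** G) - cscale \<i> (H ** \<rho> - \<rho> ** H))"

end

theory Submission
  imports Defs
begin

text \<open>If \<open>e\<^sup>t\<^sup>L\<close> is completely positive for all real \<open>t\<close>, then for every vector \<open>w\<close> the Choi form
  \<open>\<langle>w, C(e\<^sup>t\<^sup>L) w\<rangle>\<close> is a nonnegative real function of \<open>t\<close> that equals \<open>|\<langle>\<omega>, w\<rangle>|\<^sup>2\<close> at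
  \<open>t = 0\<close>, where \<open>\<omega>\<close> is the maximally entangled vector. Differentiating at \<open>t = 0\<close> shows
  that the Choi form of \<open>L\<close> is hermitian and vanishes on \<open>\<omega>\<^sup>\<bottom>\<close>, which means
  \<open>L \<rho> = K \<rho> + \<rho> K\<^sup>*\<close>. In a minimal presentation the completely positive part \<open>\<Psi>\<close> is
  then itself of the form \<open>\<rho> \<mapsto> A \<rho> + \<rho> B\<close>, and the trace conditions on its
  Jamiolkowski transform force \<open>\<Psi> = 0\<close>. If \<open>e\<^sup>t\<^sup>L\<close> is moreover trace non-increasing
  for all real \<open>t\<close>, then \<open>tr (e\<^sup>t\<^sup>L \<rho>)\<close> is maximal at \<open>t = 0\<close>, so \<open>tr (G \<rho>) = 0\<close> for all
  \<open>\<rho> \<ge> 0\<close>, i.e. \<open>G = 0\<close>; finally the exponential of \<open>\<rho> \<mapsto> -\<i>(H \<rho> - \<rho> H)\<close> factors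
  into those of the commuting left and right multiplications.\<close>

section \<open>Superoperators as a Banach algebra\<close>

text \<open>Bounded linear maps on matrices get a type of their own because the library has no
  algebra instance for \<open>'a \<Rightarrow>\<^sub>L 'a\<close>. In the resulting Banach algebra \<open>sop_exp t L\<close> is
  \<open>exp (t L)\<close>, whose derivative is available.\<close>

typedef (overloaded) ('n::finite) superop = "UNIV :: ('n cmat \<Rightarrow>\<^sub>L 'n cmat) set"
  morphisms superop_blinfun Superop
  by simp

setup_lifting type_definition_superop

lemma blinfun_zero_neq_id: "(0::'n::finite cmat \<Rightarrow>\<^sub>L 'n cmat) \<noteq> id_blinfun"
proof
  assume zero_eq_id: "(0::'n cmat \<Rightarrow>\<^sub>L 'n cmat) = id_blinfun"
  have "blinfun_apply (0::'n cmat \<Rightarrow>\<^sub>L 'n cmat) (mat 1) = mat 1"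
    by (subst zero_eq_id) simp
  then have "(mat 1 :: 'n cmat) $ undefined $ undefined = 0"
    by simp
  then show False
    by (simp add: mat_def)
qed

instantiation superop :: (finite) real_normed_algebra_1
begin

lift_definition zero_superop :: "'a superop" is 0 .
lift_definition one_superop :: "'a superop" is id_blinfun .
lift_definition plus_superop :: "'a superop \<Rightarrow> 'a superop \<Rightarrow> 'a superop" is "(+)" .
lift_definition minus_superop :: "'a superop \<Rightarrow> 'a superop \<Rightarrow> 'a superop" is "(-)" .
lift_definition uminus_superop :: "'a superop \<Rightarrow> 'a superop" is uminus .
lift_definition times_superop :: "'a superop \<Rightarrow> 'a superop \<Rightarrow> 'a superop" is "(o\<^sub>L)" .
lift_definition scaleR_superop :: "real \<Rightarrow> 'a superop \<Rightarrow> 'a superop" is scaleR .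
lift_definition norm_superop :: "'a superop \<Rightarrow> real" is norm .

definition dist_superop :: "'a superop \<Rightarrow> 'a superop \<Rightarrow> real"
  where "dist_superop a b = norm (a - b)"

definition sgn_superop :: "'a superop \<Rightarrow> 'a superop"
  where "sgn_superop x = inverse (norm x) *\<^sub>R x"

definition uniformity_superop :: "('a superop \<times> 'a superop) filter"
  where "uniformity_superop = (INF e\<in>{0 <..}. principal {(x, y). dist x y < e})"

definition open_superop :: "'a superop set \<Rightarrow> bool"
  where "open_superop S = (\<forall>x\<in>S. \<forall>\<^sub>F (x', y) in uniformity. x' = x \<longrightarrow> y \<in> S)"

instance
proof
  fix a b c :: "'a superop" and r s :: real
  show "a + b + c = a + (b + c)" by transfer (simp add: algebra_simps)
  show "a + b = b + a" by transfer (simp add: algebra_simps)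
  show "0 + a = a" by transfer simp
  show "- a + a = 0" by transfer simp
  show "a - b = a + - b" by transfer simp
  show "r *\<^sub>R (a + b) = r *\<^sub>R a + r *\<^sub>R b" by transfer (simp add: algebra_simps)
  show "(r + s) *\<^sub>R a = r *\<^sub>R a + s *\<^sub>R a" by transfer (simp add: algebra_simps)
  show "r *\<^sub>R s *\<^sub>R a = (r * s) *\<^sub>R a" by transfer simp
  show "1 *\<^sub>R a = a" by transfer simp
  show "dist a b = norm (a - b)" by (simp add: dist_superop_def)
  show "sgn a = inverse (norm a) *\<^sub>R a" by (simp add: sgn_superop_def)
  show "(uniformity :: ('a superop \<times> 'a superop) filter) =
      (INF e\<in>{0 <..}. principal {(x, y). dist x y < e})"
    by (simp add: uniformity_superop_def)
  show "\<And>U::'a superop set. open U = (\<forall>x\<in>U. \<forall>\<^sub>F (x', y) in uniformity. x' = x \<longrightarrow> y \<in> U)"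
    by (simp add: open_superop_def)
  show "(norm a = 0) = (a = 0)" by transfer simp
  show "norm (a + b) \<le> norm a + norm b" by transfer (rule norm_triangle_ineq)
  show "norm (r *\<^sub>R a) = \<bar>r\<bar> * norm a" by transfer simp
  show "a * b * c = a * (b * c)" by transfer (auto intro!: blinfun_eqI)
  show "1 * a = a" by transfer (auto intro!: blinfun_eqI)
  show "a * 1 = a" by transfer (auto intro!: blinfun_eqI)
  show "(a + b) * c = a * c + b * c"
    by transfer (auto intro!: blinfun_eqI simp: blinfun.bilinear_simps)
  show "a * (b + c) = a * b + a * c"
    by transfer (auto intro!: blinfun_eqI simp: blinfun.bilinear_simps)
  show "(0::'a superop) \<noteq> 1" by transfer (rule blinfun_zero_neq_id)
  show "r *\<^sub>R a * b = r *\<^sub>R (a * b)"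
    by transfer (auto intro!: blinfun_eqI simp: blinfun.bilinear_simps)
  show "a * r *\<^sub>R b = r *\<^sub>R (a * b)"
    by transfer (auto intro!: blinfun_eqI simp: blinfun.bilinear_simps)
  show "norm (1::'a superop) = 1" by transfer (rule norm_blinfun_id)
  show "norm (a * b) \<le> norm a * norm b" by transfer (rule norm_blinfun_compose)
qed

end

lemma dist_superop_blinfun: "dist a b = dist (superop_blinfun a) (superop_blinfun b)"
  unfolding dist_norm by transfer simp

instance superop :: (finite) banach
proof
  fix X :: "nat \<Rightarrow> 'a superop"
  assume "Cauchy X"
  then have "Cauchy (\<lambda>n. superop_blinfun (X n))"
    unfolding Cauchy_def dist_superop_blinfun .
  then obtain l where "(\<lambda>n. superop_blinfun (X n)) \<longlonglongrightarrow> l"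
    using Cauchy_convergent_iff convergent_def by blast
  then have "X \<longlonglongrightarrow> Superop l"
    unfolding lim_sequentially dist_superop_blinfun by (simp add: Superop_inverse)
  then show "convergent X"
    by (auto simp: convergent_def)
qed

definition superop_apply :: "'n::finite superop \<Rightarrow> 'n cmat \<Rightarrow> 'n cmat"
  where "superop_apply M = blinfun_apply (superop_blinfun M)"

definition superop_of :: "('n::finite cmat \<Rightarrow> 'n cmat) \<Rightarrow> 'n superop"
  where "superop_of L = Superop (Blinfun L)"

lemma superop_apply_times: "superop_apply (M * N) X = superop_apply M (superop_apply N X)"
  unfolding superop_apply_def by transfer simp

lemma superop_apply_one: "superop_apply 1 = (\<lambda>X. X)"
  unfolding superop_apply_def by transfer simp

lemma superop_apply_add: "superop_apply (M + N) X = superop_apply M X + superop_apply N X"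
  unfolding superop_apply_def by transfer (simp add: blinfun.bilinear_simps)

lemma superop_apply_scaleR: "superop_apply (r *\<^sub>R M) X = r *\<^sub>R superop_apply M X"
  unfolding superop_apply_def by transfer (simp add: blinfun.bilinear_simps)

lemma superop_apply_power: "superop_apply (M ^ k) = superop_apply M ^^ k"
  by (induction k) (simp_all add: superop_apply_one superop_apply_times fun_eq_iff)

lemma superop_apply_superop_of: "bounded_linear L \<Longrightarrow> superop_apply (superop_of L) = L"
  unfolding superop_apply_def superop_of_def
  by (simp add: Superop_inverse bounded_linear_Blinfun_apply)

lemma superop_eqI: "(\<And>X. superop_apply M X = superop_apply N X) \<Longrightarrow> M = N"
  unfolding superop_apply_def by (metis blinfun_eqI superop_blinfun_inject)

lemma bounded_linear_superop_apply:
  fixes X :: "'n::finite cmat"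
  shows "bounded_linear (\<lambda>M. superop_apply M X)"
proof -
  have "bounded_linear (\<lambda>A::'n cmat \<Rightarrow>\<^sub>L 'n cmat. blinfun_apply A X)"
    by simp
  moreover have "bounded_linear (superop_blinfun :: 'n superop \<Rightarrow> _)"
    by (rule bounded_linear_intro[where K = 1]) (transfer, simp)+
  ultimately show ?thesis
    unfolding superop_apply_def by (rule bounded_linear_compose)
qed

lemma bounded_linear_superop_entry: "bounded_linear (\<lambda>M. superop_apply M X $ i $ j)"
  by (intro bounded_linear_compose[OF bounded_linear_vec_nth] bounded_linear_superop_apply)

lemma superop_exp_term:
  assumes "bounded_linear L"
  shows "superop_apply ((t *\<^sub>R superop_of L) ^ k /\<^sub>R fact k) X = (t ^ k / fact k) *\<^sub>R (L ^^ k) X"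
  by (simp add: superop_apply_scaleR superop_apply_power superop_apply_superop_of[OF assms]
      scaleR_power divide_inverse mult.commute)

lemma summable_sop_exp:
  fixes L :: "'n::finite cmat \<Rightarrow> 'n cmat"
  assumes "bounded_linear L"
  shows "summable (\<lambda>k. (t ^ k / fact k) *\<^sub>R (L ^^ k) X)"
proof -
  have "summable (\<lambda>k. superop_apply ((t *\<^sub>R superop_of L) ^ k /\<^sub>R fact k) X)"
    by (rule bounded_linear.summable[OF bounded_linear_superop_apply summable_exp_generic])
  then show ?thesis
    unfolding superop_exp_term[OF assms] .
qed

lemma sop_exp_eq_superop_exp:
  assumes "bounded_linear L"
  shows "sop_exp t L = superop_apply (exp (t *\<^sub>R superop_of L))"
proof
  fix X
  have "superop_apply (exp (t *\<^sub>R superop_of L)) X =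
      (\<Sum>k. superop_apply ((t *\<^sub>R superop_of L) ^ k /\<^sub>R fact k) X)"
    unfolding exp_def
    by (rule bounded_linear.suminf[OF bounded_linear_superop_apply summable_exp_generic])
  also have "\<dots> = sop_exp t L X"
    by (simp only: sop_exp_def superop_exp_term[OF assms])
  finally show "sop_exp t L X = superop_apply (exp (t *\<^sub>R superop_of L)) X"
    by (rule sym)
qed

lemma exp_scaleR_minimum_imp_zero:
  fixes A :: "'a::{real_normed_algebra_1,banach}" and \<phi> :: "'a \<Rightarrow> real"
  assumes \<phi>: "bounded_linear \<phi>" and min: "\<And>t. \<phi> 1 \<le> \<phi> (exp (t *\<^sub>R A))"
  shows "\<phi> A = 0"
proof -
  have "((\<lambda>t. exp (t *\<^sub>R A)) has_vector_derivative exp (0 *\<^sub>R A) * A) (at 0)"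
    by (rule exp_scaleR_has_vector_derivative_right)
  then have "((\<lambda>t. \<phi> (exp (t *\<^sub>R A))) has_vector_derivative \<phi> A) (at 0)"
    using bounded_linear.has_vector_derivative[OF \<phi>] by simp
  then have "((\<lambda>t. \<phi> (exp (t *\<^sub>R A))) has_real_derivative \<phi> A) (at 0)"
    by (simp add: has_real_derivative_iff_has_vector_derivative)
  moreover have "\<forall>y. \<bar>0 - y\<bar> < 1 \<longrightarrow> \<phi> (exp (0 *\<^sub>R A)) \<le> \<phi> (exp (y *\<^sub>R A))"
    using min by simp
  ultimately show ?thesis
    by (rule DERIV_local_min[OF _ zero_less_one])
qed

lemma sop_exp_minimum_imp_zero:
  fixes \<phi> :: "('n::finite cmat \<Rightarrow> 'n cmat) \<Rightarrow> real"
  assumes L: "bounded_linear L" and \<phi>: "bounded_linear (\<lambda>M. \<phi> (superop_apply M))"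
    and min: "\<And>t. \<phi> (\<lambda>X. X) \<le> \<phi> (sop_exp t L)"
  shows "\<phi> L = 0"
proof -
  have "\<And>t. \<phi> (superop_apply 1) \<le> \<phi> (superop_apply (exp (t *\<^sub>R superop_of L)))"
    using min by (simp add: superop_apply_one sop_exp_eq_superop_exp[OF L])
  then have "\<phi> (superop_apply (superop_of L)) = 0"
    by (rule exp_scaleR_minimum_imp_zero[OF \<phi>])
  then show ?thesis
    by (simp add: superop_apply_superop_of[OF L])
qed

lemma cmat_eqI: "(\<And>i j. A $ i $ j = B $ i $ j) \<Longrightarrow> A = (B :: 'a^'n^'m)"
  by (simp add: vec_eq_iff)

lemma scaleR_eq_cscale: "r *\<^sub>R (X::'n::finite cmat) = cscale (of_real r) X"
proof (rule cmat_eqI)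
  fix i j
  show "(r *\<^sub>R X) $ i $ j = cscale (of_real r) X $ i $ j"
    unfolding cscale_def vector_scaleR_component by (simp add: scaleR_conv_of_real)
qed

lemma cscale_matrix_mult_left: "cscale c A ** B = cscale c (A ** B)"
  by (simp add: vec_eq_iff cscale_def matrix_matrix_mult_def sum_distrib_left mult.assoc)

lemma cscale_matrix_mult_right: "A ** cscale c B = cscale c (A ** B)"
  by (simp add: vec_eq_iff cscale_def matrix_matrix_mult_def sum_distrib_left mult.left_commute)

lemma cscale_cscale: "cscale a (cscale b X) = cscale (a * b) X"
  by (simp add: vec_eq_iff cscale_def mult.assoc)

lemma cscale_add: "cscale c (X + Y) = cscale c X + cscale c Y"
  by (simp add: vec_eq_iff cscale_def distrib_left)

lemma cscale_diff: "cscale c (X - Y) = cscale c X - cscale c Y"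
  by (simp add: vec_eq_iff cscale_def right_diff_distrib)

lemma matrix_add_rdistrib: "(A + B) ** C = A ** C + B ** (C::'a::semiring_1^'n^'m)"
  by (simp add: vec_eq_iff matrix_matrix_mult_def sum.distrib distrib_right)

lemma matrix_diff_rdistrib: "(A - B) ** C = A ** C - B ** (C::'a::ring_1^'n^'m)"
  by (simp add: vec_eq_iff matrix_matrix_mult_def sum_subtractf left_diff_distrib)

lemma matrix_diff_ldistrib: "C ** (A - B) = C ** A - C ** (B::'a::ring_1^'n^'m)"
  by (simp add: vec_eq_iff matrix_matrix_mult_def sum_subtractf right_diff_distrib)

lemma trace_cscale: "trace (cscale c X) = c * trace X"
  by (simp add: trace_def cscale_def sum_distrib_left)

lemma trace_zero: "trace (0::'a::comm_ring_1^'n^'n) = 0"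
  by (simp add: trace_def)

lemma trace_uminus: "trace (- X) = - trace (X::'a::comm_ring_1^'n^'n)"
  by (simp add: trace_def sum_negf)

lemma clinear_sop_imp_linear: "clinear_sop L \<Longrightarrow> linear L"
  unfolding clinear_sop_def by (intro linearI) (simp_all add: scaleR_eq_cscale)

lemma clinear_sop_imp_bounded_linear: "clinear_sop L \<Longrightarrow> bounded_linear L"
  using clinear_sop_imp_linear linear_conv_bounded_linear by blast

lemma clinear_sop_left_right_mult:
  fixes A B :: "'n::finite cmat"
  shows "clinear_sop (\<lambda>\<rho>. A ** \<rho> + \<rho> ** B)"
  unfolding clinear_sop_def
  by (simp add: matrix_add_ldistrib matrix_add_rdistrib cscale_matrix_mult_left
      cscale_matrix_mult_right cscale_add)

lemma bounded_linear_left_mult: "bounded_linear (\<lambda>X::'n::finite cmat. (C::'n cmat) ** X)"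
  using clinear_sop_left_right_mult[of C 0] by (simp add: clinear_sop_imp_bounded_linear)

lemma bounded_linear_right_mult: "bounded_linear (\<lambda>X::'n::finite cmat. X ** (C::'n cmat))"
  using clinear_sop_left_right_mult[of 0 C] by (simp add: clinear_sop_imp_bounded_linear)

lemma sum_delta_mult: "(\<Sum>s\<in>UNIV. f s * (if s = q then 1 else 0)) = (f (q::'i::finite) :: 'a::semiring_1)"
  by (simp add: if_distrib cong: if_cong)

lemma sum_mult_delta: "(\<Sum>s\<in>UNIV. (if s = q then 1 else 0) * f s) = (f (q::'i::finite) :: 'a::semiring_1)"
proof -
  have "(\<Sum>s\<in>UNIV. (if s = q then 1 else 0) * f s) = (\<Sum>s\<in>UNIV. if s = q then f s else 0)"
    by (rule sum.cong) auto
  then show ?thesis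
    by simp
qed

lemma matrix_mult_mat_unit_right: "(A ** mat_unit b d) $ a $ c = A $ a $ b * (if c = d then 1 else 0)"
  by (cases "c = d") (auto simp: matrix_matrix_mult_def mat_unit_def sum_delta_mult)

lemma matrix_mult_mat_unit_left: "(mat_unit b d ** B) $ a $ c = (if a = b then 1 else 0) * B $ d $ c"
  by (cases "a = b") (auto simp: matrix_matrix_mult_def mat_unit_def sum_mult_delta)

lemma mat_unit_expansion: "(\<rho>::'n::finite cmat) = (\<Sum>a\<in>UNIV. \<Sum>b\<in>UNIV. cscale (\<rho> $ a $ b) (mat_unit a b))"
proof (rule cmat_eqI)
  fix i j
  have "(\<Sum>a\<in>UNIV. \<Sum>b\<in>UNIV. cscale (\<rho> $ a $ b) (mat_unit a b)) $ i $ j =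
      (\<Sum>a\<in>UNIV. (if a = i then 1 else 0) * (\<Sum>b\<in>UNIV. \<rho> $ a $ b * (if b = j then 1 else 0)))"
    by (auto simp: cscale_def mat_unit_def sum_distrib_left intro!: sum.cong)
  then show "\<rho> $ i $ j = (\<Sum>a\<in>UNIV. \<Sum>b\<in>UNIV. cscale (\<rho> $ a $ b) (mat_unit a b)) $ i $ j"
    by (simp add: sum_delta_mult sum_mult_delta)
qed

lemma clinear_sop_mat_unit_expansion:
  assumes "clinear_sop L"
  shows "L \<rho> = (\<Sum>a\<in>UNIV. \<Sum>b\<in>UNIV. cscale (\<rho> $ a $ b) (L (mat_unit a b)))"
proof -
  have "\<And>c X. L (cscale c X) = cscale c (L X)"
    using assms unfolding clinear_sop_def by blast
  then show ?thesis
    by (subst mat_unit_expansion)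
      (simp add: linear_sum[OF clinear_sop_imp_linear[OF assms]])
qed

lemma clinear_sop_eqI_mat_units:
  assumes "clinear_sop L" and "clinear_sop L'" and "\<And>a b. L (mat_unit a b) = L' (mat_unit a b)"
  shows "L = L'"
proof
  fix \<rho>
  show "L \<rho> = L' \<rho>"
    using assms(3) by (simp add: clinear_sop_mat_unit_expansion[OF assms(1), of \<rho>]
        clinear_sop_mat_unit_expansion[OF assms(2), of \<rho>])
qed

section \<open>Sesquilinear forms\<close>

definition sesq_form :: "('i::finite \<Rightarrow> 'i \<Rightarrow> complex) \<Rightarrow> ('i \<Rightarrow> complex) \<Rightarrow> ('i \<Rightarrow> complex) \<Rightarrow> complex"
  where "sesq_form M u v = (\<Sum>p\<in>UNIV. \<Sum>q\<in>UNIV. cnj (u p) * M p q * v q)"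

definition unit_fun :: "'i \<Rightarrow> 'i \<Rightarrow> complex"
  where "unit_fun p = (\<lambda>r. if r = p then 1 else 0)"

lemma sesq_form_add_left: "sesq_form M (\<lambda>p. u p + v p) w = sesq_form M u w + sesq_form M v w"
  by (simp add: sesq_form_def algebra_simps sum.distrib)

lemma sesq_form_add_right: "sesq_form M w (\<lambda>p. u p + v p) = sesq_form M w u + sesq_form M w v"
  by (simp add: sesq_form_def algebra_simps sum.distrib)

lemma sesq_form_diff_left: "sesq_form M (\<lambda>p. u p - v p) w = sesq_form M u w - sesq_form M v w"
  by (simp add: sesq_form_def algebra_simps sum_subtractf)

lemma sesq_form_diff_right: "sesq_form M w (\<lambda>p. u p - v p) = sesq_form M w u - sesq_form M w v"
  by (simp add: sesq_form_def algebra_simps sum_subtractf)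

lemma sesq_form_scale_left: "sesq_form M (\<lambda>p. c * u p) w = cnj c * sesq_form M u w"
  by (simp add: sesq_form_def algebra_simps sum_distrib_left)

lemma sesq_form_scale_right: "sesq_form M w (\<lambda>p. c * u p) = c * sesq_form M w u"
  by (simp add: sesq_form_def algebra_simps sum_distrib_left)

lemma cnj_unit_fun: "cnj (unit_fun p r) = unit_fun p r"
  by (simp add: unit_fun_def)

lemma sesq_form_unit_fun_left: "sesq_form M (unit_fun p) u = (\<Sum>s\<in>UNIV. M p s * u s)"
proof -
  have "sesq_form M (unit_fun p) u = (\<Sum>r\<in>UNIV. unit_fun p r * (\<Sum>s\<in>UNIV. M r s * u s))"
    by (simp add: sesq_form_def cnj_unit_fun sum_distrib_left mult.assoc)
  then show ?thesis
    by (simp only: unit_fun_def sum_mult_delta)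
qed

lemma sesq_form_unit_funs: "sesq_form M (unit_fun p) (unit_fun q) = M p q"
  by (simp only: sesq_form_unit_fun_left) (simp only: unit_fun_def sum_delta_mult)

lemma sesq_form_hermitian_swap:
  assumes "\<And>p q. M p q = cnj (M q p)"
  shows "cnj (sesq_form M u v) = sesq_form M v u"
proof -
  have "cnj (sesq_form M u v) = (\<Sum>p\<in>UNIV. \<Sum>q\<in>UNIV. cnj (v q) * M q p * u p)"
    unfolding sesq_form_def cnj_sum by (subst (2) assms) (simp add: mult_ac)
  also have "\<dots> = sesq_form M v u"
    unfolding sesq_form_def by (rule sum.swap)
  finally show ?thesis .
qed

lemma sesq_form_polarization:
  assumes "\<And>u w. u \<in> S \<Longrightarrow> w \<in> S \<Longrightarrow> (\<lambda>p. u p + w p) \<in> S"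
    and "\<And>w. w \<in> S \<Longrightarrow> (\<lambda>p. \<i> * w p) \<in> S"
    and "\<And>w. w \<in> S \<Longrightarrow> sesq_form M w w = 0"
    and "u \<in> S" and "w \<in> S"
  shows "sesq_form M u w = 0"
proof -
  have "0 = sesq_form M (\<lambda>p. u p + w p) (\<lambda>p. u p + w p)"
    using assms by simp
  also have "\<dots> = sesq_form M u w + sesq_form M w u"
    using assms by (simp add: sesq_form_add_left sesq_form_add_right)
  finally have sum: "sesq_form M u w + sesq_form M w u = 0"
    by simp
  have "0 = sesq_form M (\<lambda>p. u p + \<i> * w p) (\<lambda>p. u p + \<i> * w p)"
    using assms by simp
  also have "\<dots> = \<i> * sesq_form M u w - \<i> * sesq_form M w u"
    using assms by (simp add: sesq_form_add_left sesq_form_add_right sesq_form_scale_left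
        sesq_form_scale_right algebra_simps)
  finally have "sesq_form M u w = sesq_form M w u"
    by (simp add: algebra_simps)
  with sum show ?thesis
    by simp
qed

lemma sesq_form_diagonal_zero_imp_zero:
  assumes "\<And>w. sesq_form M w w = 0"
  shows "M p q = 0"
  using sesq_form_polarization[of UNIV M "unit_fun p" "unit_fun q"] assms
  by (simp add: sesq_form_unit_funs)

lemma sesq_form_real_imp_hermitian:
  assumes real: "\<And>w. Im (sesq_form M w w) = 0"
  shows "M p q = cnj (M q p)"
proof -
  have "sesq_form M (\<lambda>r. unit_fun p r + unit_fun q r) (\<lambda>r. unit_fun p r + unit_fun q r) =
      M p p + M p q + M q p + M q q"
    by (simp add: sesq_form_add_left sesq_form_add_right sesq_form_unit_funs)
  then have "Im (M p q) + Im (M q p) = 0"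
    using real[of "\<lambda>r. unit_fun p r + unit_fun q r"] real[of "unit_fun p"] real[of "unit_fun q"]
    by (simp add: sesq_form_unit_funs)
  moreover have "sesq_form M (\<lambda>r. unit_fun p r + \<i> * unit_fun q r) (\<lambda>r. unit_fun p r + \<i> * unit_fun q r) =
      M p p + \<i> * M p q - \<i> * M q p + M q q"
    by (simp add: sesq_form_add_left sesq_form_add_right sesq_form_scale_left sesq_form_scale_right
        sesq_form_unit_funs algebra_simps)
  then have "Re (M p q) - Re (M q p) = 0"
    using real[of "\<lambda>r. unit_fun p r + \<i> * unit_fun q r"] real[of "unit_fun p"] real[of "unit_fun q"]
    by (simp add: sesq_form_unit_funs)
  ultimately show ?thesis
    by (simp add: complex_eq_iff)
qed

lemma form_vanishing_on_orthogonal_complement: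
  fixes M :: "'i::finite \<Rightarrow> 'i \<Rightarrow> complex" and \<omega> :: "'i \<Rightarrow> complex"
  assumes vanish: "\<And>w. (\<Sum>r\<in>UNIV. \<omega> r * w r) = 0 \<Longrightarrow> sesq_form M w w = 0"
    and real: "\<And>r. cnj (\<omega> r) = \<omega> r"
    and c: "c = (\<Sum>r\<in>UNIV. \<omega> r * \<omega> r)" and "c \<noteq> 0"
  shows "M p q = (\<omega> q / c) * sesq_form M (unit_fun p) \<omega> + (\<omega> p / c) * sesq_form M \<omega> (unit_fun q)
    - (\<omega> p / c) * (\<omega> q / c) * sesq_form M \<omega> \<omega>"
proof -
  define S where "S = {w. (\<Sum>r\<in>UNIV. \<omega> r * w r) = 0}"
  define proj where "proj p = (\<lambda>r. unit_fun p r - (\<omega> p / c) * \<omega> r)" for p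
  have proj_in_S: "proj p \<in> S" for p
  proof -
    have "(\<Sum>r\<in>UNIV. \<omega> r * proj p r) = \<omega> p - (\<omega> p / c) * c"
      by (simp add: proj_def unit_fun_def c right_diff_distrib sum_subtractf sum_distrib_left
          sum_divide_distrib mult_ac sum_delta_mult)
    then show ?thesis
      using \<open>c \<noteq> 0\<close> by (simp add: S_def)
  qed
  have "sesq_form M (proj p) (proj q) = 0"
  proof (rule sesq_form_polarization[of S])
    show "(\<lambda>p. u p + w p) \<in> S" if "u \<in> S" "w \<in> S" for u w
      using that by (simp add: S_def algebra_simps sum.distrib)
    show "(\<lambda>p. \<i> * w p) \<in> S" if "w \<in> S" for w
      using that by (simp add: S_def algebra_simps flip: sum_distrib_left)
  qed (use vanish proj_in_S in \<open>auto simp: S_def\<close>)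
  moreover have "cnj (\<omega> p / c) = \<omega> p / c"
    by (simp add: c real)
  then have "sesq_form M (proj p) (proj q) = M p q -
      ((\<omega> q / c) * sesq_form M (unit_fun p) \<omega> + (\<omega> p / c) * sesq_form M \<omega> (unit_fun q)
        - (\<omega> p / c) * (\<omega> q / c) * sesq_form M \<omega> \<omega>)"
    unfolding proj_def
    by (simp only: sesq_form_diff_left sesq_form_diff_right sesq_form_scale_left
        sesq_form_scale_right sesq_form_unit_funs) (simp add: algebra_simps)
  ultimately show ?thesis
    by simp
qed

lemma hermitian_form_vanishing_on_orthogonal_complement:
  fixes M :: "'i::finite \<Rightarrow> 'i \<Rightarrow> complex" and \<omega> :: "'i \<Rightarrow> complex"
  assumes herm: "\<And>p q. M p q = cnj (M q p)"
    and vanish: "\<And>w. (\<Sum>r\<in>UNIV. \<omega> r * w r) = 0 \<Longrightarrow> sesq_form M w w = 0"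
    and real: "\<And>r. cnj (\<omega> r) = \<omega> r" and nonzero: "(\<Sum>r\<in>UNIV. \<omega> r * \<omega> r) \<noteq> 0"
  obtains R where "\<And>p q. M p q = \<omega> q * R p + \<omega> p * cnj (R q)"
proof -
  define c where "c = (\<Sum>r\<in>UNIV. \<omega> r * \<omega> r)"
  define s where "s = sesq_form M \<omega> \<omega>"
  have "cnj c = c" and "cnj s = s"
    using sesq_form_hermitian_swap[of M, OF herm] by (simp_all add: c_def s_def real)
  moreover have "sesq_form M \<omega> (unit_fun q) = cnj (sesq_form M (unit_fun q) \<omega>)" for q
    using sesq_form_hermitian_swap[of M, OF herm] by simp
  ultimately have M: "M p q = (\<omega> q / c) * sesq_form M (unit_fun p) \<omega>
      + (\<omega> p / c) * cnj (sesq_form M (unit_fun q) \<omega>) - (\<omega> p / c) * (\<omega> q / c) * s" for p q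
    using form_vanishing_on_orthogonal_complement[OF vanish real c_def] nonzero
    by (simp add: c_def[symmetric] s_def[symmetric])
  define R where "R p = sesq_form M (unit_fun p) \<omega> / c - \<omega> p * s / (2 * c\<^sup>2)" for p
  have "M p q = \<omega> q * R p + \<omega> p * cnj (R q)" for p q
    using \<open>cnj c = c\<close> \<open>cnj s = s\<close> nonzero
    by (simp add: M R_def real c_def[symmetric] field_simps power2_eq_square)
  then show thesis
    by (rule that)
qed

section \<open>The Choi form of the generator\<close>

lemma cnj_mult_self_nonneg: "0 \<le> cnj z * z"
  by (simp add: less_eq_complex_def)

lemma sum_UNIV_pair: "(\<Sum>p\<in>UNIV. f p) = (\<Sum>x\<in>UNIV. \<Sum>i\<in>UNIV. f (x, i))"
  by (simp add: sum.cartesian_product flip: UNIV_Times_UNIV)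

lemma mat_unit_quadratic_form:
  "(\<Sum>i\<in>UNIV. \<Sum>j\<in>UNIV. f i * mat_unit a b $ i $ j * g j) = (f a * g b :: complex)"
proof -
  have "(\<Sum>i\<in>UNIV. \<Sum>j\<in>UNIV. f i * mat_unit a b $ i $ j * g j) =
      (\<Sum>i\<in>UNIV. f i * (if i = a then 1 else 0)) * (\<Sum>j\<in>UNIV. (if j = b then 1 else 0) * g j)"
    by (simp add: sum_product mat_unit_def) (rule sum.cong, simp, rule sum.cong, auto)
  also have "\<dots> = f a * g b"
    by (simp only: sum_delta_mult sum_mult_delta)
  finally show ?thesis .
qed

text \<open>\<open>choi \<Lambda>\<close> is the Choi matrix \<open>\<Sum>\<^sub>a\<^sub>b E\<^sub>a\<^sub>b \<otimes> \<Lambda>(E\<^sub>a\<^sub>b)\<close>, indexed by pairs, and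
  \<open>max_entangled\<close> is the vector \<open>\<Sum>\<^sub>a e\<^sub>a \<otimes> e\<^sub>a\<close>; the Choi matrix of the identity is
  the projection onto it.\<close>

definition choi :: "('n::finite cmat \<Rightarrow> 'n cmat) \<Rightarrow> 'n \<times> 'n \<Rightarrow> 'n \<times> 'n \<Rightarrow> complex"
  where "choi \<Lambda> p q = \<Lambda> (mat_unit (fst p) (fst q)) $ snd p $ snd q"

definition max_entangled :: "'n \<times> 'n \<Rightarrow> complex"
  where "max_entangled p = (if fst p = snd p then 1 else 0)"

lemma cnj_max_entangled: "cnj (max_entangled p) = max_entangled p"
  by (simp add: max_entangled_def)

lemma sum_max_entangled_square:
  "(\<Sum>p\<in>UNIV. max_entangled (p :: 'n::finite \<times> 'n) * max_entangled p) = of_nat CARD('n)"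
proof -
  have "(\<Sum>p\<in>UNIV. max_entangled (p :: 'n \<times> 'n) * max_entangled p) =
      (\<Sum>x\<in>UNIV. \<Sum>i\<in>UNIV. max_entangled (x :: 'n, i))"
    unfolding sum_UNIV_pair[where f = "\<lambda>p. max_entangled p * max_entangled p"]
    by (intro sum.cong refl) (simp add: max_entangled_def)
  also have "\<dots> = of_nat CARD('n)"
    by (simp add: max_entangled_def)
  finally show ?thesis .
qed

lemma choi_id: "choi (\<lambda>X. X) p q = max_entangled p * max_entangled q"
  by (auto simp: choi_def max_entangled_def mat_unit_def)

lemma sesq_form_choi_id:
  "sesq_form (choi (\<lambda>X. X)) w w =
    cnj (\<Sum>r\<in>UNIV. max_entangled r * w r) * (\<Sum>r\<in>UNIV. max_entangled r * w r)"
  unfolding sesq_form_def choi_id cnj_sum sum_product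
  by (simp add: cnj_max_entangled mult_ac)

lemma block_psd_mat_units: "block_psd N (\<lambda>a b. mat_unit (h a) (h b) :: 'n::finite cmat)"
  unfolding block_psd_def
proof
  fix v :: "nat \<Rightarrow> complex^'n"
  have eq: "(\<Sum>a<N. \<Sum>b<N. \<Sum>i\<in>UNIV. \<Sum>j\<in>UNIV. cnj (v a $ i) * mat_unit (h a) (h b) $ i $ j * v b $ j) =
      cnj (\<Sum>a<N. v a $ h a) * (\<Sum>b<N. v b $ h b)"
    by (simp add: mat_unit_quadratic_form sum_product)
  show "0 \<le> (\<Sum>a<N. \<Sum>b<N. \<Sum>i\<in>UNIV. \<Sum>j\<in>UNIV.
      cnj (v a $ i) * mat_unit (h a) (h b) $ i $ j * v b $ j)"
    unfolding eq by (rule cnj_mult_self_nonneg)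
qed

lemma completely_positive_imp_choi_form_nonneg:
  fixes \<Lambda> :: "'n::finite cmat \<Rightarrow> 'n cmat"
  assumes "completely_positive \<Lambda>"
  shows "0 \<le> sesq_form (choi \<Lambda>) w w"
proof -
  define N where "N = CARD('n)"
  obtain h where h: "bij_betw h {..<N} (UNIV::'n set)"
    using ex_bij_betw_nat_finite[of "UNIV::'n set"] by (auto simp: N_def lessThan_atLeast0)
  have "N \<ge> 1"
    unfolding N_def using finite_UNIV_card_ge_0[where 'a = 'n] by simp
  then have "block_psd N (\<lambda>a b. \<Lambda> (mat_unit (h a) (h b)))"
    using assms block_psd_mat_units unfolding completely_positive_def by blast
  have reindex: "(\<Sum>a<N. F (h a)) = (\<Sum>x\<in>UNIV. F x)" for F :: "'n \<Rightarrow> complex"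
    by (rule sum.reindex_bij_betw[OF h])
  define T where
    "T x y = (\<Sum>i\<in>UNIV. \<Sum>j\<in>UNIV. cnj (w (x, i)) * \<Lambda> (mat_unit x y) $ i $ j * w (y, j))" for x y
  have "0 \<le> (\<Sum>a<N. \<Sum>b<N. T (h a) (h b))"
    using \<open>block_psd N _\<close> unfolding block_psd_def T_def
    by (rule allE[where x = "\<lambda>a. \<chi> i. w (h a, i)"]) simp
  also have "(\<Sum>a<N. \<Sum>b<N. T (h a) (h b)) = (\<Sum>a<N. \<Sum>y\<in>UNIV. T (h a) y)"
    by (rule sum.cong[OF refl reindex])
  also have "\<dots> = (\<Sum>x\<in>UNIV. \<Sum>y\<in>UNIV. T x y)"
    by (rule reindex)
  also have "\<dots> = sesq_form (choi \<Lambda>) w w"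
    unfolding sesq_form_def choi_def T_def sum_UNIV_pair[where f = "\<lambda>p. \<Sum>q\<in>UNIV. _ p q"]
      sum_UNIV_pair[where f = "\<lambda>q. _ q"]
    by (simp only: fst_conv snd_conv, rule sum.cong[OF refl], rule sum.swap)
  finally show ?thesis .
qed

lemma completely_positive_id: "completely_positive (\<lambda>X. X)"
  by (simp add: completely_positive_def)

lemma bounded_linear_choi_form: "bounded_linear (\<lambda>M. sesq_form (choi (superop_apply M)) u v)"
  unfolding sesq_form_def choi_def
  by (intro bounded_linear_sum bounded_linear_mult_const bounded_linear_const_mult
      bounded_linear_superop_entry)

lemma choi_generator_form_real:
  fixes L :: "'n::finite cmat \<Rightarrow> 'n cmat"
  assumes L: "bounded_linear L" and cp: "\<forall>t. completely_positive (sop_exp t L)"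
  shows "Im (sesq_form (choi L) w w) = 0"
proof (rule sop_exp_minimum_imp_zero[OF L, where \<phi> = "\<lambda>\<Lambda>. Im (sesq_form (choi \<Lambda>) w w)"])
  show "bounded_linear (\<lambda>M. Im (sesq_form (choi (superop_apply M)) w w))"
    by (rule bounded_linear_compose[OF bounded_linear_Im bounded_linear_choi_form])
  show "Im (sesq_form (choi (\<lambda>X. X)) w w) \<le> Im (sesq_form (choi (sop_exp t L)) w w)" for t
    using completely_positive_imp_choi_form_nonneg[OF completely_positive_id, of w]
      completely_positive_imp_choi_form_nonneg[of "sop_exp t L" w] cp
    by (simp add: less_eq_complex_def)
qed

lemma choi_generator_form_vanishes:
  fixes L :: "'n::finite cmat \<Rightarrow> 'n cmat"
  assumes L: "bounded_linear L" and cp: "\<forall>t. completely_positive (sop_exp t L)"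
    and orth: "(\<Sum>r\<in>UNIV. max_entangled r * w r) = 0"
  shows "sesq_form (choi L) w w = 0"
proof -
  have "Re (sesq_form (choi L) w w) = 0"
  proof (rule sop_exp_minimum_imp_zero[OF L, where \<phi> = "\<lambda>\<Lambda>. Re (sesq_form (choi \<Lambda>) w w)"])
    show "bounded_linear (\<lambda>M. Re (sesq_form (choi (superop_apply M)) w w))"
      by (rule bounded_linear_compose[OF bounded_linear_Re bounded_linear_choi_form])
    show "Re (sesq_form (choi (\<lambda>X. X)) w w) \<le> Re (sesq_form (choi (sop_exp t L)) w w)" for t
      using completely_positive_imp_choi_form_nonneg[of "sop_exp t L" w] cp
      by (simp add: sesq_form_choi_id orth less_eq_complex_def)
  qed
  then show ?thesis
    using choi_generator_form_real[OF L cp, of w] by (simp add: complex_eq_iff)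
qed

text \<open>The Choi form of \<open>L\<close> is hermitian and vanishes on the orthogonal complement of the
  maximally entangled vector, so it equals \<open>\<omega> R\<^sup>* + R \<omega>\<^sup>*\<close>; in matrix terms this is
  \<open>L \<rho> = K \<rho> + \<rho> K\<^sup>*\<close> with \<open>K\<close> read off from \<open>R\<close>.\<close>

lemma completely_positive_group_generator_form:
  fixes L :: "'n::finite cmat \<Rightarrow> 'n cmat"
  assumes L: "clinear_sop L" and cp: "\<forall>t. completely_positive (sop_exp t L)"
  obtains K where "\<And>\<rho>. L \<rho> = K ** \<rho> + \<rho> ** mat_adj K"
proof -
  have bl: "bounded_linear L"
    using L by (rule clinear_sop_imp_bounded_linear)
  have herm: "\<And>p q. choi L p q = cnj (choi L q p)"
    by (rule sesq_form_real_imp_hermitian) (rule choi_generator_form_real[OF bl cp])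
  have nonzero: "(\<Sum>p\<in>UNIV. max_entangled (p :: 'n \<times> 'n) * max_entangled p) \<noteq> 0"
    by (simp add: sum_max_entangled_square)
  obtain R where R: "\<And>p q. choi L p q = max_entangled q * R p + max_entangled p * cnj (R q)"
    using hermitian_form_vanishing_on_orthogonal_complement[of "choi L" max_entangled, OF herm
        choi_generator_form_vanishes[OF bl cp] cnj_max_entangled nonzero] by blast
  define K :: "'n cmat" where "K = (\<chi> i a. R (a, i))"
  have "L = (\<lambda>\<rho>. K ** \<rho> + \<rho> ** mat_adj K)"
  proof (rule clinear_sop_eqI_mat_units[OF L clinear_sop_left_right_mult])
    fix a b
    show "L (mat_unit a b) = K ** mat_unit a b + mat_unit a b ** mat_adj K"
    proof (rule cmat_eqI)
      fix i j
      have "L (mat_unit a b) $ i $ j = choi L (a, i) (b, j)"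
        by (simp add: choi_def)
      also have "\<dots> = (K ** mat_unit a b + mat_unit a b ** mat_adj K) $ i $ j"
        by (auto simp: R K_def max_entangled_def matrix_mult_mat_unit_right
            matrix_mult_mat_unit_left mat_adj_def)
      finally show "L (mat_unit a b) $ i $ j = (K ** mat_unit a b + mat_unit a b ** mat_adj K) $ i $ j" .
    qed
  qed
  then show thesis
    by (intro that[of K]) simp
qed

section \<open>Minimal presentations\<close>

lemma completely_positive_zero: "completely_positive (\<lambda>_::'n::finite cmat. 0 :: 'n cmat)"
  by (simp add: completely_positive_def block_psd_def)

lemma minimal_presentation_zero_iff:
  fixes L :: "'n::finite cmat \<Rightarrow> 'n cmat"
  shows "minimal_presentation L (\<lambda>_. 0) G H \<longleftrightarrow>
    hermitian G \<and> hermitian H \<and> trace H = 0 \<and>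
    (\<forall>\<rho>. L \<rho> = - (G ** \<rho> + \<rho> ** G) - cscale \<i> (H ** \<rho> - \<rho> ** H))"
proof -
  have "clinear_sop (\<lambda>_::'n cmat. 0 :: 'n cmat)"
    by (simp add: clinear_sop_def cscale_def vec_eq_iff)
  moreover have "jamiolkowski (\<lambda>_::'n cmat. 0 :: 'n cmat) = (\<lambda>_. 0)"
    by (simp add: fun_eq_iff jamiolkowski_def vec_eq_iff)
  ultimately show ?thesis
    by (simp add: minimal_presentation_def completely_positive_zero supported_trace_zero_def
        trace_zero)
qed

text \<open>\<open>G\<close> and \<open>H\<close> are the hermitian parts of \<open>-K\<close> and \<open>\<i>K\<close>; subtracting the trace of \<open>H\<close>
  changes nothing, since multiples of the identity drop out of the commutator.\<close>

lemma exists_minimal_presentation_zero: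
  fixes L :: "'n::finite cmat \<Rightarrow> 'n cmat"
  assumes L: "\<And>\<rho>. L \<rho> = K ** \<rho> + \<rho> ** mat_adj K"
  shows "\<exists>G H. minimal_presentation L (\<lambda>_. 0) G H"
proof -
  define n :: complex where "n = of_nat CARD('n)"
  have "n \<noteq> 0"
    by (simp add: n_def)
  define G where "G = cscale (-1/2) (K + mat_adj K)"
  define H0 where "H0 = cscale (\<i>/2) (K - mat_adj K)"
  define \<tau> where "\<tau> = trace H0 / n"
  define H where "H = H0 - cscale \<tau> (mat 1)"
  have "cnj (trace H0) = trace H0"
    unfolding H0_def trace_def cnj_sum
    by (intro sum.cong refl) (simp add: cscale_def mat_adj_def algebra_simps)
  then have "cnj \<tau> = \<tau>"
    by (simp add: \<tau>_def n_def)
  then have "hermitian H"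
    unfolding hermitian_def H_def H0_def
    by (simp add: vec_eq_iff cscale_def mat_adj_def mat_def algebra_simps)
  moreover have "hermitian G"
    unfolding hermitian_def G_def by (simp add: vec_eq_iff cscale_def mat_adj_def algebra_simps)
  moreover have "trace H = 0"
    using \<open>n \<noteq> 0\<close> by (simp add: H_def trace_sub trace_cscale trace_I \<tau>_def n_def)
  moreover have "L \<rho> = - (G ** \<rho> + \<rho> ** G) - cscale \<i> (H ** \<rho> - \<rho> ** H)" for \<rho>
  proof -
    have "- (G ** \<rho> + \<rho> ** G) - cscale \<i> (H ** \<rho> - \<rho> ** H) =
        - (cscale (-1/2) (K ** \<rho> + mat_adj K ** \<rho>) + cscale (-1/2) (\<rho> ** K + \<rho> ** mat_adj K))
        - cscale \<i> ((cscale (\<i>/2) (K ** \<rho> - mat_adj K ** \<rho>) - cscale \<tau> \<rho>)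
            - (cscale (\<i>/2) (\<rho> ** K - \<rho> ** mat_adj K) - cscale \<tau> \<rho>))"
      unfolding G_def H_def H0_def
      by (simp only: cscale_matrix_mult_left cscale_matrix_mult_right matrix_add_rdistrib
          matrix_add_ldistrib matrix_diff_rdistrib matrix_diff_ldistrib matrix_mul_lid matrix_mul_rid)
    also have "\<dots> = K ** \<rho> + \<rho> ** mat_adj K"
      by (simp add: vec_eq_iff cscale_def algebra_simps)
    finally show ?thesis
      by (simp add: L)
  qed
  ultimately show ?thesis
    unfolding minimal_presentation_zero_iff by blast
qed

lemma sum_mult_delta': "(\<Sum>s\<in>UNIV. (if q = s then 1 else 0) * f s) = (f (q::'i::finite) :: 'a::semiring_1)"
  using sum_mult_delta[of q f] by (simp add: eq_commute[of q])

lemma sum_sum_delta: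
  "(\<Sum>x\<in>UNIV. \<Sum>y\<in>UNIV. (if x = c \<and> y = d then 1 else 0) * g x y) =
    (g (c::'i::finite) (d::'j::finite) :: 'a::semiring_1)"
proof -
  have "(\<Sum>x\<in>UNIV. \<Sum>y\<in>UNIV. (if x = c \<and> y = d then 1 else 0) * g x y) =
      (\<Sum>x\<in>UNIV. (if x = c then 1 else 0) * (\<Sum>y\<in>UNIV. (if y = d then 1 else 0) * g x y))"
    by (simp add: sum_distrib_left) (intro sum.cong refl, auto)
  then show ?thesis
    by (simp only: sum_mult_delta)
qed

lemma jamiolkowski_left_right_mult_one:
  fixes A B :: "'n::finite cmat"
  shows "jamiolkowski (\<lambda>\<rho>. A ** \<rho> + \<rho> ** B) (mat 1) $ a $ b =
    of_nat CARD('n) * A $ a $ b + (if a = b then trace B else 0)"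
proof -
  have "jamiolkowski (\<lambda>\<rho>. A ** \<rho> + \<rho> ** B) (mat 1) $ a $ b =
      (\<Sum>c\<in>UNIV. (A ** mat_unit b c + mat_unit b c ** B) $ a $ c)"
    by (simp add: jamiolkowski_def mat_def sum_mult_delta')
  also have "\<dots> = (\<Sum>c\<in>UNIV. A $ a $ b + (if a = b then B $ c $ c else 0))"
    by (cases "a = b") (simp_all add: matrix_mult_mat_unit_right matrix_mult_mat_unit_left)
  also have "\<dots> = of_nat CARD('n) * A $ a $ b + (if a = b then trace B else 0)"
    by (cases "a = b") (simp_all add: sum.distrib trace_def)
  finally show ?thesis .
qed

lemma trace_jamiolkowski_left_right_mult_unit:
  fixes A B :: "'n::finite cmat"
  shows "trace (jamiolkowski (\<lambda>\<rho>. A ** \<rho> + \<rho> ** B) (mat_unit c d)) =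
    of_nat CARD('n) * B $ d $ c + (if c = d then trace A else 0)"
proof -
  have "trace (jamiolkowski (\<lambda>\<rho>. A ** \<rho> + \<rho> ** B) (mat_unit c d)) =
      (\<Sum>a\<in>UNIV. (A ** mat_unit a d + mat_unit a d ** B) $ a $ c)"
    by (simp add: trace_def jamiolkowski_def mat_unit_def sum_sum_delta)
  also have "\<dots> = (\<Sum>a\<in>UNIV. (if c = d then A $ a $ a else 0) + B $ d $ c)"
    by (cases "c = d") (simp_all add: matrix_mult_mat_unit_right matrix_mult_mat_unit_left)
  also have "\<dots> = of_nat CARD('n) * B $ d $ c + (if c = d then trace A else 0)"
    by (cases "c = d") (simp_all add: sum.distrib trace_def add.commute)
  finally show ?thesis .
qed

lemma eq_neg_divide_if_mult_add_eq_0: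
  fixes n x y :: "'a::field"
  assumes "n * x + y = 0" and "n \<noteq> 0"
  shows "x = - y / n"
proof -
  have "n * x = - y"
    using assms(1) by (simp add: eq_neg_iff_add_eq_0)
  have "x = (n * x) / n"
    using assms(2) by simp
  also have "\<dots> = - y / n"
    by (simp only: \<open>n * x = - y\<close>)
  finally show ?thesis .
qed

text \<open>\<open>J(1) = 0\<close> forces \<open>A\<close> to be scalar, \<open>tr J(E\<^sub>c\<^sub>d) = 0\<close> forces \<open>B\<close> to be scalar, and
  comparing traces shows that the two scalars cancel.\<close>

lemma left_right_mult_traceless_jamiolkowski_eq_0:
  fixes A B :: "'n::finite cmat"
  assumes "supported_trace_zero (jamiolkowski (\<lambda>\<rho>. A ** \<rho> + \<rho> ** B))"
  shows "A ** \<rho> + \<rho> ** B = 0"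
proof -
  define n :: complex where "n = of_nat CARD('n)"
  have "n \<noteq> 0"
    by (simp add: n_def)
  define \<alpha> where "\<alpha> = - trace B / n"
  define \<beta> where "\<beta> = - trace A / n"
  have "n * A $ a $ b + (if a = b then trace B else 0) = 0" for a b
    using assms jamiolkowski_left_right_mult_one[of A B a b]
    by (simp add: supported_trace_zero_def n_def)
  then have "A $ a $ b = - (if a = b then trace B else 0) / n" for a b
    using \<open>n \<noteq> 0\<close> by (rule eq_neg_divide_if_mult_add_eq_0)
  then have A_eq: "A = cscale \<alpha> (mat 1)"
    by (intro cmat_eqI) (simp add: \<alpha>_def cscale_def mat_def)
  have "n * B $ d $ c + (if c = d then trace A else 0) = 0" for c d
    using assms trace_jamiolkowski_left_right_mult_unit[of A B c d]
    by (simp add: supported_trace_zero_def n_def)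
  then have "B $ d $ c = - (if c = d then trace A else 0) / n" for c d
    using \<open>n \<noteq> 0\<close> by (rule eq_neg_divide_if_mult_add_eq_0)
  then have B_eq: "B = cscale \<beta> (mat 1)"
    by (intro cmat_eqI) (auto simp: \<beta>_def cscale_def mat_def)
  have "trace A = \<alpha> * n"
    by (simp add: A_eq trace_cscale trace_I n_def)
  then have "\<alpha> + \<beta> = 0"
    using \<open>n \<noteq> 0\<close> by (simp add: \<beta>_def)
  moreover have "A ** \<rho> + \<rho> ** B = cscale (\<alpha> + \<beta>) \<rho>"
    by (simp add: A_eq B_eq cscale_matrix_mult_left cscale_matrix_mult_right)
      (simp add: vec_eq_iff cscale_def distrib_right)
  ultimately show ?thesis
    by (simp add: vec_eq_iff cscale_def)
qed

lemma minimal_presentation_cp_part_eq_0: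
  fixes L :: "'n::finite cmat \<Rightarrow> 'n cmat"
  assumes mp: "minimal_presentation L \<Psi> G H" and L: "\<And>\<rho>. L \<rho> = K ** \<rho> + \<rho> ** K'"
  shows "\<Psi> = (\<lambda>_. 0)"
proof -
  have presentation: "L \<rho> = \<Psi> \<rho> - (G ** \<rho> + \<rho> ** G) - cscale \<i> (H ** \<rho> - \<rho> ** H)" for \<rho>
    using mp by (simp add: minimal_presentation_def)
  have \<Psi>: "\<Psi> = (\<lambda>\<rho>. (K + G + cscale \<i> H) ** \<rho> + \<rho> ** (K' + G - cscale \<i> H))"
  proof
    fix \<rho>
    have "\<Psi> \<rho> = L \<rho> + (G ** \<rho> + \<rho> ** G) + cscale \<i> (H ** \<rho> - \<rho> ** H)"
      using presentation[of \<rho>] by (simp add: algebra_simps)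
    also have "\<dots> = (K + G + cscale \<i> H) ** \<rho> + \<rho> ** (K' + G - cscale \<i> H)"
      by (simp add: L matrix_add_rdistrib matrix_add_ldistrib matrix_diff_ldistrib
          cscale_matrix_mult_left cscale_matrix_mult_right cscale_diff algebra_simps)
    finally show "\<Psi> \<rho> = (K + G + cscale \<i> H) ** \<rho> + \<rho> ** (K' + G - cscale \<i> H)" .
  qed
  have "supported_trace_zero (jamiolkowski \<Psi>)"
    using mp by (simp add: minimal_presentation_def)
  then show ?thesis
    unfolding \<Psi> fun_eq_iff by (blast intro: left_right_mult_traceless_jamiolkowski_eq_0)
qed

text \<open>Since \<open>e\<^sup>t\<^sup>L\<close> is trace non-increasing also for negative \<open>t\<close>, the trace of
  \<open>e\<^sup>t\<^sup>L \<rho>\<close> is maximal at \<open>t = 0\<close>.\<close>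

lemma trace_nonincreasing_group_imp_traceless:
  fixes L :: "'n::finite cmat \<Rightarrow> 'n cmat"
  assumes L: "bounded_linear L" and tn: "\<forall>t. trace_nonincreasing (sop_exp t L)" and "psd \<rho>"
  shows "trace (L \<rho>) = 0"
proof -
  have le: "trace (sop_exp t L \<rho>) \<le> trace \<rho>" for t
    using tn \<open>psd \<rho>\<close> unfolding trace_nonincreasing_def by blast
  have tr: "bounded_linear (\<lambda>M. trace (superop_apply M \<rho>))"
    unfolding trace_def by (intro bounded_linear_sum bounded_linear_superop_entry)
  have "- Re (trace (L \<rho>)) = 0"
  proof (rule sop_exp_minimum_imp_zero[OF L, where \<phi> = "\<lambda>\<Lambda>. - Re (trace (\<Lambda> \<rho>))"])
    show "bounded_linear (\<lambda>M. - Re (trace (superop_apply M \<rho>)))"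
      by (intro bounded_linear_minus bounded_linear_compose[OF bounded_linear_Re tr])
    show "- Re (trace \<rho>) \<le> - Re (trace (sop_exp t L \<rho>))" for t
      using le[of t] by (simp add: less_eq_complex_def)
  qed
  moreover have "Im (trace (L \<rho>)) = 0"
  proof (rule sop_exp_minimum_imp_zero[OF L, where \<phi> = "\<lambda>\<Lambda>. Im (trace (\<Lambda> \<rho>))"])
    show "bounded_linear (\<lambda>M. Im (trace (superop_apply M \<rho>)))"
      by (rule bounded_linear_compose[OF bounded_linear_Im tr])
    show "Im (trace \<rho>) \<le> Im (trace (sop_exp t L \<rho>))" for t
      using le[of t] by (simp add: less_eq_complex_def)
  qed
  ultimately show ?thesis
    by (simp add: complex_eq_iff)
qed

lemma psd_rank_one: "psd (\<chi> i j. w i * cnj (w j) :: 'n::finite cmat)"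
  unfolding psd_def
proof
  fix x :: "complex^'n"
  have eq: "(\<Sum>i\<in>UNIV. \<Sum>j\<in>UNIV. cnj (x $ i) * (\<chi> i j. w i * cnj (w j) :: 'n cmat) $ i $ j * x $ j) =
      cnj (\<Sum>j\<in>UNIV. cnj (w j) * x $ j) * (\<Sum>j\<in>UNIV. cnj (w j) * x $ j)"
    unfolding cnj_sum sum_product by (simp add: mult_ac)
  show "0 \<le> (\<Sum>i\<in>UNIV. \<Sum>j\<in>UNIV.
      cnj (x $ i) * (\<chi> i j. w i * cnj (w j) :: 'n cmat) $ i $ j * x $ j)"
    unfolding eq by (rule cnj_mult_self_nonneg)
qed

lemma trace_mult_rank_one:
  "trace (G ** (\<chi> i j. w i * cnj (w j))) = sesq_form (\<lambda>i j. G $ i $ j) w w"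
  unfolding sesq_form_def trace_def matrix_matrix_mult_def by (simp add: mult_ac)

lemma minimal_presentation_trace_nonincreasing_imp_G_eq_0:
  fixes L :: "'n::finite cmat \<Rightarrow> 'n cmat"
  assumes L: "bounded_linear L" and mp: "minimal_presentation L (\<lambda>_. 0) G H"
    and tn: "\<forall>t. trace_nonincreasing (sop_exp t L)"
  shows "G = 0"
proof -
  have "sesq_form (\<lambda>i j. G $ i $ j) w w = 0" for w
  proof -
    define \<rho> :: "'n cmat" where "\<rho> = (\<chi> i j. w i * cnj (w j))"
    have "trace (L \<rho>) = 0"
      unfolding \<rho>_def by (rule trace_nonincreasing_group_imp_traceless[OF L tn psd_rank_one])
    moreover have "trace (L \<rho>) = - 2 * trace (G ** \<rho>)"
      using mp by (simp add: minimal_presentation_zero_iff trace_add trace_sub trace_uminus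
          trace_cscale trace_mul_sym[of \<rho>])
    ultimately show ?thesis
      by (simp add: \<rho>_def trace_mult_rank_one)
  qed
  then have "G $ i $ j = 0" for i j
    using sesq_form_diagonal_zero_imp_zero[of "\<lambda>i j. G $ i $ j"] by simp
  then show ?thesis
    by (simp add: vec_eq_iff)
qed

section \<open>Exponentials of left and right multiplications\<close>

lemma mat_pow_Suc_right: "mat_pow C (Suc k) = mat_pow C k ** C"
  by (induction k) (simp_all add: matrix_mul_assoc)

lemma funpow_left_mult: "((\<lambda>X. C ** X) ^^ k) Y = mat_pow C k ** Y"
  by (induction k) (simp_all add: matrix_mul_assoc)

lemma funpow_right_mult: "((\<lambda>X. X ** C) ^^ k) Y = Y ** mat_pow C k"
  by (induction k) (simp_all add: matrix_mul_assoc mat_pow_Suc_right del: mat_pow.simps(2))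

lemma summable_mat_exp: "summable (\<lambda>k. (1 / fact k) *\<^sub>R mat_pow (C::'n::finite cmat) k)"
  using summable_sop_exp[OF bounded_linear_left_mult[of C], where t = 1 and X = "mat 1"]
  by (simp add: funpow_left_mult)

lemma sop_exp_one_left_mult: "sop_exp 1 (\<lambda>X. C ** X) Y = mat_exp C ** Y"
proof -
  have "sop_exp 1 (\<lambda>X. C ** X) Y = (\<Sum>k. ((1 / fact k) *\<^sub>R mat_pow C k) ** Y)"
    by (simp add: sop_exp_def funpow_left_mult scaleR_eq_cscale cscale_matrix_mult_left)
  also have "\<dots> = mat_exp C ** Y"
    unfolding mat_exp_def
    by (rule bounded_linear.suminf[OF bounded_linear_right_mult summable_mat_exp, symmetric])
  finally show ?thesis .
qed

lemma sop_exp_one_right_mult: "sop_exp 1 (\<lambda>X. X ** C) Y = Y ** mat_exp C"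
proof -
  have "sop_exp 1 (\<lambda>X. X ** C) Y = (\<Sum>k. Y ** ((1 / fact k) *\<^sub>R mat_pow C k))"
    by (simp add: sop_exp_def funpow_right_mult scaleR_eq_cscale cscale_matrix_mult_right)
  also have "\<dots> = Y ** mat_exp C"
    unfolding mat_exp_def
    by (rule bounded_linear.suminf[OF bounded_linear_left_mult summable_mat_exp, symmetric])
  finally show ?thesis .
qed

lemma sop_exp_left_right_mult:
  fixes A B :: "'n::finite cmat"
  assumes L: "\<And>\<rho>. L \<rho> = A ** \<rho> + \<rho> ** B"
  shows "sop_exp t L \<rho> = mat_exp (cscale (of_real t) A) ** \<rho> ** mat_exp (cscale (of_real t) B)"
proof -
  define l where "l = superop_of (\<lambda>X. cscale (of_real t) A ** X)"
  define r where "r = superop_of (\<lambda>X. X ** cscale (of_real t) B)"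
  have "L = (\<lambda>\<rho>. A ** \<rho> + \<rho> ** B)"
    using L by (simp add: fun_eq_iff)
  then have bl: "bounded_linear L"
    by (simp add: clinear_sop_imp_bounded_linear[OF clinear_sop_left_right_mult])
  have l: "superop_apply l = (\<lambda>X. cscale (of_real t) A ** X)"
    unfolding l_def by (rule superop_apply_superop_of[OF bounded_linear_left_mult])
  have r: "superop_apply r = (\<lambda>X. X ** cscale (of_real t) B)"
    unfolding r_def by (rule superop_apply_superop_of[OF bounded_linear_right_mult])
  have "t *\<^sub>R superop_of L = l + r"
    by (rule superop_eqI) (simp add: superop_apply_scaleR superop_apply_add
        superop_apply_superop_of[OF bl] l r L scaleR_eq_cscale cscale_matrix_mult_left
        cscale_matrix_mult_right cscale_add)
  moreover have "l * r = r * l"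
    by (rule superop_eqI) (simp add: superop_apply_times l r matrix_mul_assoc)
  moreover have exp_superop_of: "superop_apply (exp (superop_of F)) = sop_exp 1 F"
    if "bounded_linear F" for F :: "'n cmat \<Rightarrow> 'n cmat"
    using sop_exp_eq_superop_exp[OF that, of 1] by simp
  ultimately have "sop_exp t L \<rho> = superop_apply (exp l) (superop_apply (exp r) \<rho>)"
    by (simp add: sop_exp_eq_superop_exp[OF bl] exp_add_commuting superop_apply_times)
  also have "\<dots> = mat_exp (cscale (of_real t) A) ** (\<rho> ** mat_exp (cscale (of_real t) B))"
    by (simp add: l_def r_def exp_superop_of bounded_linear_left_mult bounded_linear_right_mult
        sop_exp_one_left_mult sop_exp_one_right_mult)
  finally show ?thesis
    by (simp add: matrix_mul_assoc)
qed

lemma minimal_presentation_hamiltonian_sop_exp: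
  fixes L :: "'n::finite cmat \<Rightarrow> 'n cmat"
  assumes "minimal_presentation L (\<lambda>_. 0) 0 H"
  shows "sop_exp t L \<rho> =
    mat_exp (cscale (- \<i> * of_real t) H) ** \<rho> ** mat_exp (cscale (\<i> * of_real t) H)"
proof -
  have "L \<rho> = cscale (- \<i>) H ** \<rho> + \<rho> ** cscale \<i> H" for \<rho>
  proof -
    have "L \<rho> = - cscale \<i> (H ** \<rho> - \<rho> ** H)"
      using assms by (simp add: minimal_presentation_zero_iff)
    also have "\<dots> = cscale (- \<i>) H ** \<rho> + \<rho> ** cscale \<i> H"
      by (simp add: cscale_matrix_mult_left cscale_matrix_mult_right)
        (simp add: vec_eq_iff cscale_def algebra_simps)
    finally show ?thesis .
  qed
  from sop_exp_left_right_mult[OF this] show ?thesis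
    by (simp add: cscale_cscale mult.commute)
qed

theorem mainTheorem7:
  fixes L :: "'n::finite cmat \<Rightarrow> 'n cmat"
  assumes "clinear_sop L"
    and "\<forall>t::real. completely_positive (sop_exp t L)"
  shows "(\<exists>G H. minimal_presentation L (\<lambda>_. 0) G H)
    \<and> (\<forall>\<Psi> G H. minimal_presentation L \<Psi> G H \<longrightarrow>
          \<Psi> = (\<lambda>_. 0) \<and>
          ((\<forall>t::real. trace_nonincreasing (sop_exp t L)) \<longrightarrow>
             G = 0 \<and>
             (\<forall>(t::real) \<rho>. sop_exp t L \<rho> =
                mat_exp (cscale (- \<i> * of_real t) H) ** \<rho> ** mat_exp (cscale (\<i> * of_real t) H))))"
proof -
  have L: "bounded_linear L"
    using assms(1) by (rule clinear_sop_imp_bounded_linear)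
  obtain K where K: "\<And>\<rho>. L \<rho> = K ** \<rho> + \<rho> ** mat_adj K"
    using completely_positive_group_generator_form[OF assms] by blast
  show ?thesis
  proof (intro conjI allI impI)
    show "\<exists>G H. minimal_presentation L (\<lambda>_. 0) G H"
      using K by (rule exists_minimal_presentation_zero)
    fix \<Psi> G H
    assume mp: "minimal_presentation L \<Psi> G H"
    then show \<Psi>: "\<Psi> = (\<lambda>_. 0)"
      using K by (rule minimal_presentation_cp_part_eq_0)
    assume tn: "\<forall>t. trace_nonincreasing (sop_exp t L)"
    with L mp show G: "G = 0"
      unfolding \<Psi> by (rule minimal_presentation_trace_nonincreasing_imp_G_eq_0)
    fix t \<rho>
    show "sop_exp t L \<rho> =
        mat_exp (cscale (- \<i> * of_real t) H) ** \<rho> ** mat_exp (cscale (\<i> * of_real t) H)"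
      using mp unfolding \<Psi> G by (rule minimal_presentation_hamiltonian_sop_exp)
  qed
qed

end
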